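(* Let $S$ be a set. Every structured set of $S$-probabilities is a $\vee$-specific set of $S$-probabilities, and every $\vee$-specific set of $S$-probabilities is a weakly structured set of $S$-probabilities; i.e. $\mathcal C_3\subseteq\mathcal C_2\subseteq\mathcal C_4$.
   Context: An $S$-probability is a function $p\colon S\to[0,1]$; sets $P$ of them are ordered pointwise, $0,1$ are constant functions, $p':=1-p$, sums are pointwise; $p\vee q$ denotes the supremum in $P$. $p\wedge q=0$ means the only $x\in P$ with $x\le p,q$ is $x=0$; $p\perp q$ means $p\le 1-q$. Conditions: (1) $0,1\in P$; (2) $p\in P\Rightarrow 1-p\in P$; (3) $p,q\in P$, $p\wedge q=0\Rightarrow p+q\in P$; (6) $p,q\in P$, $p\wedge q=0\Rightarrow p+q\in P$ and $p+q$ is the supremum $p\vee q$ in $P$; (7) $p,q,r\in P$, $p\perp q$, $q\perp r$, $p\wedge r=0\Rightarrow p+q+r\in P$; (8) $p,q,r\in P$, $p\perp q$, $q\perp r$, $p\wedge r=0\Rightarrow p+q+r\le 1$. $\mathcal C_1$: specific sets (satisfying (1),(2),(3)); $\mathcal C_2$: $\vee$-specific sets (specific sets satisfying (6)); $\mathcal C_3$: structured sets (satisfying (1),(2),(7)); $\mathcal C_4$: weakly structured sets (satisfying (1),(2),(8)). *)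

theory Defs
  imports Complex_Main "HOL-Library.Function_Algebras"
begin

text \<open>An S-probability is a function p : S \<Rightarrow> [0,1]; S is modelled as the type 's.
  Sets P of S-probabilities are ordered pointwise (the order on functions in HOL is pointwise).\<close>

definition sprob :: "('s \<Rightarrow> real) \<Rightarrow> bool" where
  "sprob p \<longleftrightarrow> (\<forall>s. 0 \<le> p s \<and> p s \<le> 1)"

definition sprob_set :: "('s \<Rightarrow> real) set \<Rightarrow> bool" where
  "sprob_set P \<longleftrightarrow> (\<forall>p\<in>P. sprob p)"

definition meet_zero :: "('s \<Rightarrow> real) set \<Rightarrow> ('s \<Rightarrow> real) \<Rightarrow> ('s \<Rightarrow> real) \<Rightarrow> bool" where
  "meet_zero P p q \<longleftrightarrow> (\<forall>x\<in>P. x \<le> p \<and> x \<le> q \<longrightarrow> x = 0)"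

definition orth :: "('s \<Rightarrow> real) \<Rightarrow> ('s \<Rightarrow> real) \<Rightarrow> bool" where
  "orth p q \<longleftrightarrow> p \<le> 1 - q"

definition is_sup_in :: "('s \<Rightarrow> real) set \<Rightarrow> ('s \<Rightarrow> real) \<Rightarrow> ('s \<Rightarrow> real) \<Rightarrow> ('s \<Rightarrow> real) \<Rightarrow> bool" where
  "is_sup_in P p q r \<longleftrightarrow> r \<in> P \<and> p \<le> r \<and> q \<le> r \<and> (\<forall>u\<in>P. p \<le> u \<and> q \<le> u \<longrightarrow> r \<le> u)"

definition cond1 :: "('s \<Rightarrow> real) set \<Rightarrow> bool" where
  "cond1 P \<longleftrightarrow> 0 \<in> P \<and> 1 \<in> P"

definition cond2 :: "('s \<Rightarrow> real) set \<Rightarrow> bool" where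
  "cond2 P \<longleftrightarrow> (\<forall>p\<in>P. 1 - p \<in> P)"

definition cond3 :: "('s \<Rightarrow> real) set \<Rightarrow> bool" where
  "cond3 P \<longleftrightarrow> (\<forall>p\<in>P. \<forall>q\<in>P. meet_zero P p q \<longrightarrow> p + q \<in> P)"

definition cond6 :: "('s \<Rightarrow> real) set \<Rightarrow> bool" where
  "cond6 P \<longleftrightarrow> (\<forall>p\<in>P. \<forall>q\<in>P. meet_zero P p q \<longrightarrow> p + q \<in> P \<and> is_sup_in P p q (p + q))"

definition cond7 :: "('s \<Rightarrow> real) set \<Rightarrow> bool" where
  "cond7 P \<longleftrightarrow> (\<forall>p\<in>P. \<forall>q\<in>P. \<forall>r\<in>P.
      orth p q \<and> orth q r \<and> meet_zero P p r \<longrightarrow> p + q + r \<in> P)"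

definition cond8 :: "('s \<Rightarrow> real) set \<Rightarrow> bool" where
  "cond8 P \<longleftrightarrow> (\<forall>p\<in>P. \<forall>q\<in>P. \<forall>r\<in>P.
      orth p q \<and> orth q r \<and> meet_zero P p r \<longrightarrow> p + q + r \<le> 1)"

definition specific :: "('s \<Rightarrow> real) set \<Rightarrow> bool" where
  "specific P \<longleftrightarrow> sprob_set P \<and> cond1 P \<and> cond2 P \<and> cond3 P"

definition vee_specific :: "('s \<Rightarrow> real) set \<Rightarrow> bool" where
  "vee_specific P \<longleftrightarrow> specific P \<and> cond6 P"

definition structured :: "('s \<Rightarrow> real) set \<Rightarrow> bool" where
  "structured P \<longleftrightarrow> sprob_set P \<and> cond1 P \<and> cond2 P \<and> cond7 P"

definition weakly_structured :: "('s \<Rightarrow> real) set \<Rightarrow> bool" where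
  "weakly_structured P \<longleftrightarrow> sprob_set P \<and> cond1 P \<and> cond2 P \<and> cond8 P"

end

theory Submission
  imports Defs
begin

text \<open>Condition (7) with the middle term \<open>q = 0\<close> gives (3). With \<open>q = 1 - u\<close> for an upper
  bound \<open>u \<in> P\<close> of \<open>p\<close> and \<open>r\<close> it gives \<open>p + (1 - u) + r \<in> P\<close>, so \<open>p + (1 - u) + r \<le> 1\<close>,
  i.e. \<open>p + r \<le> u\<close>: the sum is the supremum, which is (6). Conversely, under (6), if
  \<open>p \<perp> q \<perp> r\<close> then \<open>1 - q \<in> P\<close> is an upper bound of \<open>p\<close> and \<open>r\<close>, hence of their supremum
  \<open>p + r\<close>, which is (8).\<close>

lemma orth_iff_le_complement: "orth p q \<longleftrightarrow> q \<le> 1 - p"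
  unfolding orth_def le_fun_def by (auto simp: algebra_simps)

lemma sprob_set_bounds:
  assumes "sprob_set P" "p \<in> P"
  shows "0 \<le> p" "p \<le> 1"
  using assms unfolding sprob_set_def sprob_def le_fun_def by auto

lemma cond7_imp_cond3:
  assumes "sprob_set P" "0 \<in> P" "cond7 P"
  shows "cond3 P"
  unfolding cond3_def
proof (intro ballI impI)
  fix p q assume "p \<in> P" "q \<in> P" "meet_zero P p q"
  moreover have "orth p 0" "orth 0 q"
    using sprob_set_bounds[OF \<open>sprob_set P\<close>] \<open>p \<in> P\<close> \<open>q \<in> P\<close>
    by (simp_all add: orth_iff_le_complement)
  ultimately have "p + 0 + q \<in> P"
    using \<open>0 \<in> P\<close> \<open>cond7 P\<close> unfolding cond7_def by blast
  then show "p + q \<in> P" by simp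
qed

lemma cond7_sum_le_upper_bound:
  assumes "sprob_set P" "cond2 P" "cond7 P"
    and "p \<in> P" "q \<in> P" "u \<in> P" "meet_zero P p q" "p \<le> u" "q \<le> u"
  shows "p + q \<le> u"
proof -
  have "1 - u \<in> P" using \<open>cond2 P\<close> \<open>u \<in> P\<close> unfolding cond2_def by blast
  moreover have "orth p (1 - u)" "orth (1 - u) q"
    using \<open>p \<le> u\<close> \<open>q \<le> u\<close> by (simp_all add: orth_iff_le_complement)
  ultimately have "p + (1 - u) + q \<in> P"
    using assms(3-5,7) unfolding cond7_def by blast
  then have "p + (1 - u) + q \<le> 1"
    using sprob_set_bounds(2)[OF \<open>sprob_set P\<close>] by blast
  then show ?thesis by (simp add: le_fun_def algebra_simps)
qed

lemma cond7_imp_cond6: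
  assumes "sprob_set P" "0 \<in> P" "cond2 P" "cond7 P"
  shows "cond6 P"
  unfolding cond6_def is_sup_in_def
proof (intro ballI impI conjI)
  fix p q assume "p \<in> P" "q \<in> P" "meet_zero P p q"
  show "p + q \<in> P"
    using cond7_imp_cond3[OF assms(1,2,4)] \<open>p \<in> P\<close> \<open>q \<in> P\<close> \<open>meet_zero P p q\<close>
    unfolding cond3_def by blast
  then show "p + q \<in> P" .
  show "p \<le> p + q" "q \<le> p + q"
    using sprob_set_bounds(1)[OF \<open>sprob_set P\<close>] \<open>p \<in> P\<close> \<open>q \<in> P\<close> by (simp_all add: le_fun_def)
  show "p + q \<le> u" if "u \<in> P" "p \<le> u \<and> q \<le> u" for u
    using cond7_sum_le_upper_bound[OF assms(1,3,4) \<open>p \<in> P\<close> \<open>q \<in> P\<close>] that \<open>meet_zero P p q\<close>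
    by blast
qed

lemma cond6_imp_cond8:
  assumes "cond2 P" "cond6 P"
  shows "cond8 P"
  unfolding cond8_def
proof (intro ballI impI)
  fix p q r assume "p \<in> P" "q \<in> P" "r \<in> P"
    and orth: "orth p q \<and> orth q r \<and> meet_zero P p r"
  have "1 - q \<in> P" using \<open>cond2 P\<close> \<open>q \<in> P\<close> unfolding cond2_def by blast
  moreover have "p \<le> 1 - q" "r \<le> 1 - q"
    using orth unfolding orth_def le_fun_def by (auto simp: algebra_simps)
  moreover have "is_sup_in P p r (p + r)"
    using \<open>cond6 P\<close> \<open>p \<in> P\<close> \<open>r \<in> P\<close> orth unfolding cond6_def by blast
  ultimately have "p + r \<le> 1 - q" unfolding is_sup_in_def by blast
  then show "p + q + r \<le> 1" by (simp add: le_fun_def algebra_simps)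
qed

theorem lemma3p1:
  fixes P Q :: "('s \<Rightarrow> real) set"
  shows "(structured P \<longrightarrow> vee_specific P) \<and> (vee_specific Q \<longrightarrow> weakly_structured Q)"
proof (intro conjI impI)
  assume "structured P"
  then have "sprob_set P" "cond1 P" "cond2 P" "cond7 P"
    unfolding structured_def by auto
  moreover have "0 \<in> P" using \<open>cond1 P\<close> unfolding cond1_def by blast
  ultimately show "vee_specific P"
    unfolding vee_specific_def specific_def
    using cond7_imp_cond3 cond7_imp_cond6 by blast
next
  assume "vee_specific Q"
  then show "weakly_structured Q"
    unfolding vee_specific_def specific_def weakly_structured_def
    using cond6_imp_cond8 by blast
qed

end
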